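(* The filtration $F^\bullet(A/\!/E(1))_*$ is multiplicative: $F^i(A/\!/E(1))_*\cdot F^j(A/\!/E(1))_*\subseteq F^{i+j}(A/\!/E(1))_*$ for all $i,j$. Thus the associated graded $E^0(A/\!/E(1))_*=\bigoplus_jF^j/F^{j+1}$ is an $E(2)_*$-comodule algebra.
   Context: Let $p$ be an odd prime. In the mod $p$ dual Steenrod algebra let $\zeta_n,\overline{\tau}_n$ be the conjugates of Milnor's $\xi_n,\tau_n$. Let $(A/\!/E(1))_*=\mathbb{F}_p[\zeta_1,\zeta_2,\ldots]\otimes E(\overline{\tau}_2,\overline{\tau}_3,\ldots)$ and $(A/\!/E(2))_*=\mathbb{F}_p[\zeta_1,\ldots]\otimes E(\overline{\tau}_3,\ldots)$, comodule algebras over $E(2)_*=E(\overline{\tau}_0,\overline{\tau}_1,\overline{\tau}_2)$ via the coproduct of the dual Steenrod algebra. Weight: $\mathrm{wt}(\zeta_k)=\mathrm{wt}(\overline{\tau}_k)=p^k$, additive on products. Every monomial of $(A/\!/E(1))_*$ is uniquely $m\overline{\tau}_2^{\epsilon}$ with $m$ a monomial of $(A/\!/E(2))_*$ and $\epsilon\in\{0,1\}$. Let $F^j(A/\!/E(1))_*$ be the span of the monomials $m\overline{\tau}_2^\epsilon$ with $\mathrm{wt}(m)\geq pj$ (equivalently $F^j=\kappa^{-1}(\bigoplus_{k\ge j}M_2(k)\otimes E(\overline{\tau}_2))$ where $\kappa(m\overline{\tau}_2^\epsilon)=m\otimes\overline{\tau}_2^\epsilon$ and $M_2(k)$ is the span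 of monomials of $(A/\!/E(2))_*$ of weight $pk$); this is a decreasing filtration by $E(2)_*$-subcomodules. *)

theory Defs
  imports Main "HOL-Library.Poly_Mapping" "HOL-Computational_Algebra.Primes"
begin

text \<open>Model of the mod p algebra (A//E(1))_* = F_p[zeta_1,zeta_2,...] (x) E(taubar_2,taubar_3,...).
A monomial is a pair (e, S): e is the finitely supported exponent vector of the zeta_k
(key k, k \<ge> 1), S is the finite set of indices k \<ge> 2 of the exterior generators taubar_k
occurring, written in increasing order of k.\<close>

type_synonym mono = "(nat \<Rightarrow>\<^sub>0 nat) \<times> nat set"

definition valid_mono :: "mono \<Rightarrow> bool" where
  "valid_mono m \<longleftrightarrow> Poly_Mapping.keys (fst m) \<subseteq> {1..} \<and> finite (snd m) \<and> snd m \<subseteq> {2..}"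

definition AE1 :: "(mono \<Rightarrow>\<^sub>0 'k::field) set" where
  "AE1 = {x. \<forall>m\<in>Poly_Mapping.keys x. valid_mono m}"

text \<open>Sign of taubar_S * taubar_T after reordering into increasing order (graded commutativity).\<close>
definition mono_sign :: "mono \<Rightarrow> mono \<Rightarrow> 'k::field" where
  "mono_sign m n = (-1) ^ card {(a, b). a \<in> snd m \<and> b \<in> snd n \<and> b < a}"

definition mono_mult :: "mono \<Rightarrow> mono \<Rightarrow> mono" where
  "mono_mult m n = (fst m + fst n, snd m \<union> snd n)"

definition mono_coeff :: "mono \<Rightarrow> mono \<Rightarrow> 'k::field" where
  "mono_coeff m n = (if snd m \<inter> snd n = {} then mono_sign m n else 0)"

definition ae_mult :: "(mono \<Rightarrow>\<^sub>0 'k::field) \<Rightarrow> (mono \<Rightarrow>\<^sub>0 'k) \<Rightarrow> (mono \<Rightarrow>\<^sub>0 'k)" where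
  "ae_mult x y = (\<Sum>m\<in>Poly_Mapping.keys x. \<Sum>n\<in>Poly_Mapping.keys y.
      Poly_Mapping.single (mono_mult m n) (Poly_Mapping.lookup x m * Poly_Mapping.lookup y n * mono_coeff m n))"

definition wt :: "nat \<Rightarrow> mono \<Rightarrow> nat" where
  "wt p m = (\<Sum>k\<in>Poly_Mapping.keys (fst m). Poly_Mapping.lookup (fst m) k * p ^ k) + (\<Sum>k\<in>snd m. p ^ k)"

text \<open>The monomial m taubar_2^eps has (A//E(2))_*-part m = (e, S - {2}).
F^j = span of monomials m taubar_2^eps with wt(m) \<ge> p j.\<close>
definition Filt :: "nat \<Rightarrow> nat \<Rightarrow> (mono \<Rightarrow>\<^sub>0 'k::field) set" where
  "Filt p j = {x \<in> AE1. \<forall>m\<in>Poly_Mapping.keys x. wt p (fst m, snd m - {2}) \<ge> p * j}"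

end

theory Submission
  imports Defs
begin

text \<open>The weight is additive on products of monomials, and removing taubar_2 commutes with
  multiplication.  A product of two monomials is either zero or a single monomial, so every
  monomial of \<open>x y\<close> has \<open>(A//E(2))\<^sub>*\<close>-part of weight at least \<open>p i + p j\<close>.  No property of
  \<open>p\<close> or of the coefficient field is used.\<close>

definition e2_part :: "mono \<Rightarrow> mono" where
  "e2_part m = (fst m, snd m - {2})"

lemma sum_keys_lookup_add:
  fixes a b :: "'a \<Rightarrow>\<^sub>0 'b::comm_semiring_0"
  shows "(\<Sum>k\<in>Poly_Mapping.keys (a + b). Poly_Mapping.lookup (a + b) k * f k)
       = (\<Sum>k\<in>Poly_Mapping.keys a. Poly_Mapping.lookup a k * f k)
       + (\<Sum>k\<in>Poly_Mapping.keys b. Poly_Mapping.lookup b k * f k)"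
proof -
  let ?K = "Poly_Mapping.keys a \<union> Poly_Mapping.keys b"
  have extend: "(\<Sum>k\<in>Poly_Mapping.keys c. Poly_Mapping.lookup c k * f k)
              = (\<Sum>k\<in>?K. Poly_Mapping.lookup c k * f k)"
    if "Poly_Mapping.keys c \<subseteq> ?K" for c :: "'a \<Rightarrow>\<^sub>0 'b"
    using that by (intro sum.mono_neutral_left) (auto simp: in_keys_iff)
  have "(\<Sum>k\<in>Poly_Mapping.keys (a + b). Poly_Mapping.lookup (a + b) k * f k)
      = (\<Sum>k\<in>?K. Poly_Mapping.lookup (a + b) k * f k)"
    by (rule extend[OF keys_add])
  also have "\<dots> = (\<Sum>k\<in>?K. Poly_Mapping.lookup a k * f k) + (\<Sum>k\<in>?K. Poly_Mapping.lookup b k * f k)"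
    by (simp add: lookup_add distrib_right sum.distrib)
  finally show ?thesis
    by (simp add: extend)
qed

lemma wt_mono_mult:
  assumes "finite (snd m)" "finite (snd n)" "snd m \<inter> snd n = {}"
  shows "wt p (mono_mult m n) = wt p m + wt p n"
  using assms by (simp add: wt_def mono_mult_def sum_keys_lookup_add sum.union_disjoint)

lemma e2_part_mono_mult: "e2_part (mono_mult m n) = mono_mult (e2_part m) (e2_part n)"
  by (auto simp: e2_part_def mono_mult_def)

lemma wt_e2_part_mono_mult:
  assumes "finite (snd m)" "finite (snd n)" "snd m \<inter> snd n = {}"
  shows "wt p (e2_part (mono_mult m n)) = wt p (e2_part m) + wt p (e2_part n)"
  unfolding e2_part_mono_mult using assms by (intro wt_mono_mult) (auto simp: e2_part_def)

lemma valid_mono_mult: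
  assumes "valid_mono m" "valid_mono n"
  shows "valid_mono (mono_mult m n)"
  using assms keys_add[of "fst m" "fst n"] by (auto simp: valid_mono_def mono_mult_def)

lemma keys_ae_mult:
  "Poly_Mapping.keys (ae_mult x y) \<subseteq> {mono_mult m n | m n.
     m \<in> Poly_Mapping.keys x \<and> n \<in> Poly_Mapping.keys y \<and> snd m \<inter> snd n = {}}"
proof -
  have "Poly_Mapping.keys (ae_mult x y) \<subseteq> (\<Union>m\<in>Poly_Mapping.keys x. \<Union>n\<in>Poly_Mapping.keys y.
      Poly_Mapping.keys (Poly_Mapping.single (mono_mult m n)
        (Poly_Mapping.lookup x m * Poly_Mapping.lookup y n * mono_coeff m n)))"
    unfolding ae_mult_def by (intro order.trans[OF keys_sum] UN_mono order_refl keys_sum)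
  also have "\<dots> \<subseteq> {mono_mult m n | m n.
     m \<in> Poly_Mapping.keys x \<and> n \<in> Poly_Mapping.keys y \<and> snd m \<inter> snd n = {}}"
    by (auto simp: mono_coeff_def split: if_splits) blast
  finally show ?thesis .
qed

lemma Filt_iff: "x \<in> Filt p j \<longleftrightarrow>
    (\<forall>m\<in>Poly_Mapping.keys x. valid_mono m \<and> p * j \<le> wt p (e2_part m))"
  by (auto simp: Filt_def AE1_def e2_part_def)

lemma ae_mult_Filt:
  assumes "x \<in> Filt p i" "y \<in> Filt p j"
  shows "ae_mult x y \<in> Filt p (i + j)"
  unfolding Filt_iff
proof
  fix q assume "q \<in> Poly_Mapping.keys (ae_mult x y)"
  then obtain m n where q: "q = mono_mult m n" and disjoint: "snd m \<inter> snd n = {}"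
    and m: "m \<in> Poly_Mapping.keys x" and n: "n \<in> Poly_Mapping.keys y"
    using keys_ae_mult by blast
  have vm: "valid_mono m" and wm: "p * i \<le> wt p (e2_part m)"
    using assms(1) m by (auto simp: Filt_iff)
  have vn: "valid_mono n" and wn: "p * j \<le> wt p (e2_part n)"
    using assms(2) n by (auto simp: Filt_iff)
  have "p * (i + j) \<le> wt p (e2_part q)"
    using vm vn wm wn disjoint unfolding q
    by (simp add: wt_e2_part_mono_mult valid_mono_def add_mult_distrib2 add_mono)
  with vm vn show "valid_mono q \<and> p * (i + j) \<le> wt p (e2_part q)"
    by (simp add: q valid_mono_mult)
qed

theorem mainTheorem15:
  fixes p :: nat and i j :: nat
    and x y :: "mono \<Rightarrow>\<^sub>0 'k::{field,finite}"
  assumes "prime p" and "odd p" and "card (UNIV :: 'k set) = p"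
    and "x \<in> Filt p i" and "y \<in> Filt p j"
  shows "ae_mult x y \<in> Filt p (i + j)"
  using assms(4,5) by (rule ae_mult_Filt)

end
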